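(* Let $p\in(1,\infty)$, let $X$ be a Banach space and $(Y,d_Y)$ a metric space, and suppose $X$ coarse Lipschitz embeds into $Y$. If $Y$ has property HFC$_{p,d}$ (resp. HIC$_{p,d}$, resp. HC$_{p,d}$), then $X$ has property HFC$_{p,d}$ (resp. HIC$_{p,d}$, resp. HC$_{p,d}$).
   Context: Notation: for infinite $\mathbb M\subseteq\mathbb N$ and $k\in\mathbb N$, $[\mathbb M]^k$ is the set of $\bar n=(n_1,\dots,n_k)\in\mathbb M^k$ with $n_1<\dots<n_k$, with Hamming distance $d_{\mathbb H}(\bar n,\bar m)=|\{j:n_j\ne m_j\}|$; $[\mathbb M]^\omega$ is the set of infinite subsets of $\mathbb M$; $I_k(\mathbb M)=\{(\bar n,\bar m): n_1<m_1<\dots<n_k<m_k\}$; $H_j(\mathbb M)=\{(\bar n,\bar m)\in([\mathbb M]^k)^2: n_i=m_i\ (i\ne j),\ n_j<m_j\}$. For a metric space $(M,d)$, $p\in(1,\infty)$, $\lambda>0$, and a Lipschitz $f:([\mathbb N]^k,d_{\mathbb H})\to M$, put $\alpha_j=\sup_{(\bar n,\bar m)\in H_j(\mathbb N)}d(f(\bar n),f(\bar m))$. $M$ has $\lambda$-HFC$_{p,d}$ (resp. $\lambda$-HIC$_{p,d}$) if for every $k$ and every such $f$ there is $\mathbb M\in[\mathbb N]^\omega$ with $d(f(\bar n),f(\bar m))\le\lambda(\sum_{j=1}^k\alpha_j^p)^{1/p}$ for all $\bar n,\bar m\in[\mathbb M]^k$ (resp. all $(\bar n,\bar m)\in I_k(\mathbb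 M)$). $M$ has $\lambda$-HC$_{p,d}$ if for every $k$ and every such $f$ there are $\bar n,\bar m\in[\mathbb N]^k$ with $\bar n\cap\bar m=\varnothing$ (as sets) and $d(f(\bar n),f(\bar m))\le\lambda(\sum_{j=1}^k\alpha_j^p)^{1/p}$. Property HFC$_{p,d}$ (etc.) means $\lambda$-HFC$_{p,d}$ (etc.) for some $\lambda>0$. A map $\varphi:X\to Y$ is a coarse Lipschitz embedding if there are $A,B,C,D\in(0,\infty)$ with $\rho_\varphi(t)\ge At-B$ and $\omega_\varphi(t)\le Ct+D$ for all $t\ge0$, where $\rho_\varphi(t)=\inf\{d_Y(\varphi(x),\varphi(y)):\|x-y\|\ge t\}$ and $\omega_\varphi(t)=\sup\{d_Y(\varphi(x),\varphi(y)):\|x-y\|\le t\}$. *)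

theory Defs
  imports "HOL-Analysis.Analysis"
begin

text \<open>k-tuples n_1 < ... < n_k from a set M, represented as strictly increasing lists
  (list index j corresponds to the paper's index j+1).\<close>
definition tuples :: "nat set \<Rightarrow> nat \<Rightarrow> nat list set" where
  "tuples M k = {ns. length ns = k \<and> sorted_wrt (<) ns \<and> set ns \<subseteq> M}"

definition hamming :: "nat list \<Rightarrow> nat list \<Rightarrow> nat" where
  "hamming ns ms = card {j. j < length ns \<and> ns ! j \<noteq> ms ! j}"

definition interlaced :: "nat set \<Rightarrow> nat \<Rightarrow> (nat list \<times> nat list) set" where
  "interlaced M k = {(ns, ms). ns \<in> tuples M k \<and> ms \<in> tuples M k \<and>
      (\<forall>i<k. ns ! i < ms ! i) \<and> (\<forall>i. i + 1 < k \<longrightarrow> ms ! i < ns ! (i + 1))}"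

text \<open>H_j(M) (0-based index j)\<close>
definition Hpairs :: "nat set \<Rightarrow> nat \<Rightarrow> nat \<Rightarrow> (nat list \<times> nat list) set" where
  "Hpairs M k j = {(ns, ms). ns \<in> tuples M k \<and> ms \<in> tuples M k \<and>
      (\<forall>i<k. i \<noteq> j \<longrightarrow> ns ! i = ms ! i) \<and> ns ! j < ms ! j}"

definition hlipschitz :: "nat \<Rightarrow> (nat list \<Rightarrow> 'b::metric_space) \<Rightarrow> bool" where
  "hlipschitz k f \<longleftrightarrow> (\<exists>L. \<forall>ns\<in>tuples UNIV k. \<forall>ms\<in>tuples UNIV k.
      dist (f ns) (f ms) \<le> L * real (hamming ns ms))"

definition alpha :: "nat \<Rightarrow> (nat list \<Rightarrow> 'b::metric_space) \<Rightarrow> nat \<Rightarrow> real" where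
  "alpha k f j = (SUP nm\<in>Hpairs UNIV k j. dist (f (fst nm)) (f (snd nm)))"

definition hbound :: "real \<Rightarrow> real \<Rightarrow> nat \<Rightarrow> (nat list \<Rightarrow> 'b::metric_space) \<Rightarrow> real" where
  "hbound p lam k f = lam * (\<Sum>j<k. alpha k f j powr p) powr (1 / p)"

definition lam_HFC :: "real \<Rightarrow> real \<Rightarrow> 'b::metric_space itself \<Rightarrow> bool" where
  "lam_HFC p lam _ \<longleftrightarrow> (\<forall>k (f :: nat list \<Rightarrow> 'b). hlipschitz k f \<longrightarrow>
     (\<exists>M. infinite M \<and> (\<forall>ns\<in>tuples M k. \<forall>ms\<in>tuples M k.
        dist (f ns) (f ms) \<le> hbound p lam k f)))"

definition lam_HIC :: "real \<Rightarrow> real \<Rightarrow> 'b::metric_space itself \<Rightarrow> bool" where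
  "lam_HIC p lam _ \<longleftrightarrow> (\<forall>k (f :: nat list \<Rightarrow> 'b). hlipschitz k f \<longrightarrow>
     (\<exists>M. infinite M \<and> (\<forall>(ns, ms)\<in>interlaced M k.
        dist (f ns) (f ms) \<le> hbound p lam k f)))"

definition lam_HC :: "real \<Rightarrow> real \<Rightarrow> 'b::metric_space itself \<Rightarrow> bool" where
  "lam_HC p lam _ \<longleftrightarrow> (\<forall>k (f :: nat list \<Rightarrow> 'b). hlipschitz k f \<longrightarrow>
     (\<exists>ns\<in>tuples UNIV k. \<exists>ms\<in>tuples UNIV k. set ns \<inter> set ms = {} \<and>
        dist (f ns) (f ms) \<le> hbound p lam k f))"

definition HFC :: "real \<Rightarrow> 'b::metric_space itself \<Rightarrow> bool" where
  "HFC p T \<longleftrightarrow> (\<exists>lam>0. lam_HFC p lam T)"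

definition HIC :: "real \<Rightarrow> 'b::metric_space itself \<Rightarrow> bool" where
  "HIC p T \<longleftrightarrow> (\<exists>lam>0. lam_HIC p lam T)"

definition HC :: "real \<Rightarrow> 'b::metric_space itself \<Rightarrow> bool" where
  "HC p T \<longleftrightarrow> (\<exists>lam>0. lam_HC p lam T)"

text \<open>Compression and expansion moduli, valued in the extended reals
  (inf of empty set = +\<infinity>).\<close>
definition rho_mod :: "('a::real_normed_vector \<Rightarrow> 'b::metric_space) \<Rightarrow> real \<Rightarrow> ereal" where
  "rho_mod \<phi> t = Inf {ereal (dist (\<phi> x) (\<phi> y)) | x y. norm (x - y) \<ge> t}"

definition omega_mod :: "('a::real_normed_vector \<Rightarrow> 'b::metric_space) \<Rightarrow> real \<Rightarrow> ereal" where
  "omega_mod \<phi> t = Sup {ereal (dist (\<phi> x) (\<phi> y)) | x y. norm (x - y) \<le> t}"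

definition coarse_lipschitz_embedding :: "('a::real_normed_vector \<Rightarrow> 'b::metric_space) \<Rightarrow> bool" where
  "coarse_lipschitz_embedding \<phi> \<longleftrightarrow> (\<exists>A B C D. A > 0 \<and> B > 0 \<and> C > 0 \<and> D > 0 \<and>
     (\<forall>t\<ge>0. rho_mod \<phi> t \<ge> ereal (A * t - B) \<and> omega_mod \<phi> t \<le> ereal (C * t + D)))"

end

theory Submission imports Defs begin

text \<open>Given a Hamming-Lipschitz map f into X, compose it with the embedding after scaling X by a
  large factor t. The upper coarse bound controls each alpha_j of the composite by
  C t alpha_j(f) + D, so the Y-estimate for the composite bounds d(f n, f m) through the lower
  coarse bound; t is chosen so large that all additive constants are absorbed by t A S, where
  S is the p-sum of the alpha_j(f). If S = 0 then f is constant on tuples and there is nothing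
  to prove.\<close>

lemma coarse_lipschitz_embedding_bounds:
  assumes "coarse_lipschitz_embedding \<phi>"
  obtains A B C D where "A > 0" "B > 0" "C > 0" "D > 0"
    and "\<And>x y. dist (\<phi> x) (\<phi> y) \<le> C * norm (x - y) + D"
    and "\<And>x y. A * norm (x - y) - B \<le> dist (\<phi> x) (\<phi> y)"
proof -
  obtain A B C D where pos: "A > 0" "B > 0" "C > 0" "D > 0" and
    moduli: "\<And>t. t \<ge> 0 \<Longrightarrow> rho_mod \<phi> t \<ge> ereal (A * t - B) \<and> omega_mod \<phi> t \<le> ereal (C * t + D)"
    using assms unfolding coarse_lipschitz_embedding_def by blast
  have upper: "dist (\<phi> x) (\<phi> y) \<le> C * norm (x - y) + D" for x y
  proof -
    have "ereal (dist (\<phi> x) (\<phi> y)) \<le> omega_mod \<phi> (norm (x - y))"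
      unfolding omega_mod_def by (rule Sup_upper) auto
    also have "\<dots> \<le> ereal (C * norm (x - y) + D)" using moduli[of "norm (x - y)"] by simp
    finally show ?thesis by simp
  qed
  have lower: "A * norm (x - y) - B \<le> dist (\<phi> x) (\<phi> y)" for x y
  proof -
    have "ereal (A * norm (x - y) - B) \<le> rho_mod \<phi> (norm (x - y))"
      using moduli[of "norm (x - y)"] by simp
    also have "\<dots> \<le> ereal (dist (\<phi> x) (\<phi> y))"
      unfolding rho_mod_def by (rule Inf_lower) auto
    finally show ?thesis by simp
  qed
  show ?thesis using that pos upper lower by blast
qed

lemma tuples_mono: "M \<subseteq> N \<Longrightarrow> tuples M k \<subseteq> tuples N k"
  unfolding tuples_def by auto

lemma interlaced_subset_tuples: "(ns, ms) \<in> interlaced M k \<Longrightarrow> ns \<in> tuples UNIV k \<and> ms \<in> tuples UNIV k"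
  unfolding interlaced_def tuples_def by auto

lemma hamming_le_length: "hamming ns ms \<le> length ns"
proof -
  have "{j. j < length ns \<and> ns ! j \<noteq> ms ! j} \<subseteq> {..<length ns}" by auto
  then show ?thesis unfolding hamming_def by (metis card_lessThan card_mono finite_lessThan)
qed

lemma hamming_pos:
  assumes "ns \<in> tuples UNIV k" "ms \<in> tuples UNIV k" "ns \<noteq> ms"
  shows "hamming ns ms \<ge> 1"
proof -
  have "length ns = k" "length ms = k" using assms(1,2) unfolding tuples_def by auto
  then obtain j where "j < length ns" "ns ! j \<noteq> ms ! j"
    using assms(3) nth_equalityI by metis
  then have "{j. j < length ns \<and> ns ! j \<noteq> ms ! j} \<noteq> {}" by blast
  then show ?thesis unfolding hamming_def by (simp add: Suc_leI card_gt_0_iff)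
qed

lemma Hpairs_nonempty:
  assumes "j < k" shows "Hpairs UNIV k j \<noteq> {}"
proof -
  define ns where "ns = map (\<lambda>i. 2*i) [0..<k]"
  define ms where "ms = ns[j := 2*j+1]"
  have "ns \<in> tuples UNIV k" unfolding tuples_def ns_def
    by (auto simp: sorted_wrt_iff_nth_less)
  moreover have "ms \<in> tuples UNIV k" using assms unfolding tuples_def ms_def ns_def
    by (auto simp: sorted_wrt_iff_nth_less nth_list_update)
  moreover have "(\<forall>i<k. i \<noteq> j \<longrightarrow> ns ! i = ms ! i) \<and> ns ! j < ms ! j"
    using assms unfolding ms_def ns_def by auto
  ultimately have "(ns, ms) \<in> Hpairs UNIV k j" unfolding Hpairs_def by auto
  then show ?thesis by blast
qed

lemma dist_le_alpha:
  assumes "hlipschitz k f" and "(ns, ms) \<in> Hpairs UNIV k j"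
  shows "dist (f ns) (f ms) \<le> alpha k f j"
proof -
  obtain L where L: "\<And>ns ms. ns \<in> tuples UNIV k \<Longrightarrow> ms \<in> tuples UNIV k \<Longrightarrow>
      dist (f ns) (f ms) \<le> L * real (hamming ns ms)"
    using assms(1) unfolding hlipschitz_def by blast
  have "bdd_above ((\<lambda>nm. dist (f (fst nm)) (f (snd nm))) ` Hpairs UNIV k j)"
  proof (rule bdd_aboveI2)
    fix nm assume "nm \<in> Hpairs UNIV k j"
    then have tup: "fst nm \<in> tuples UNIV k" "snd nm \<in> tuples UNIV k" "length (fst nm) = k"
      unfolding Hpairs_def tuples_def by auto
    have "L * real (hamming (fst nm) (snd nm)) \<le> \<bar>L\<bar> * real k"
      using hamming_le_length[of "fst nm" "snd nm"] tup(3)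
      by (intro order.trans[OF abs_ge_self[THEN mult_right_mono] mult_left_mono]) auto
    then show "dist (f (fst nm)) (f (snd nm)) \<le> \<bar>L\<bar> * real k"
      using L[OF tup(1,2)] by linarith
  qed
  from cSUP_upper[OF assms(2) this] show ?thesis unfolding alpha_def by simp
qed

lemma alpha_nonneg:
  assumes "hlipschitz k f" "j < k"
  shows "alpha k f j \<ge> 0"
proof -
  obtain ns ms where "(ns, ms) \<in> Hpairs UNIV k j" using Hpairs_nonempty[OF assms(2)] by auto
  then show ?thesis using dist_le_alpha[OF assms(1)] zero_le_dist order_trans by metis
qed

lemma tuple_update_from_above:
  assumes ns: "ns \<in> tuples UNIV k" and ms: "ms \<in> tuples UNIV k"
    and le: "\<forall>a<k. ns ! a \<le> ms ! a" and agree: "\<forall>j. i < j \<and> j < k \<longrightarrow> ns ! j = ms ! j"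
    and "i < k"
  shows "ns[i := ms ! i] \<in> tuples UNIV k"
proof -
  have len: "length ns = k" "length ms = k" using ns ms by (auto simp: tuples_def)
  have sn: "\<And>a b. a < b \<Longrightarrow> b < k \<Longrightarrow> ns ! a < ns ! b"
    and sm: "\<And>a b. a < b \<Longrightarrow> b < k \<Longrightarrow> ms ! a < ms ! b"
    using ns ms len by (simp_all add: tuples_def sorted_wrt_nth_less)
  have "ns[i := ms ! i] ! a < ns[i := ms ! i] ! b" if "a < b" "b < k" for a b
  proof -
    consider "a = i" | "b = i" | "a \<noteq> i" "b \<noteq> i" using \<open>a < b\<close> by blast
    then show ?thesis
    proof cases
      case 1
      then show ?thesis using that agree sm[of i b] len by (simp add: nth_list_update)
    next
      case 2
      then show ?thesis using that le sn[of a i] len by (fastforce simp: nth_list_update)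
    next
      case 3
      then show ?thesis using that sn len by (simp add: nth_list_update)
    qed
  qed
  then show ?thesis using len unfolding tuples_def by (simp add: sorted_wrt_iff_nth_less)
qed

lemma alpha_zero_imp_eq_of_le:
  assumes f: "hlipschitz k f" and zero: "\<forall>j<k. alpha k f j = 0"
  shows "ns \<in> tuples UNIV k \<Longrightarrow> ms \<in> tuples UNIV k \<Longrightarrow> \<forall>a<k. ns ! a \<le> ms ! a
     \<Longrightarrow> \<forall>j. i \<le> j \<and> j < k \<longrightarrow> ns ! j = ms ! j \<Longrightarrow> f ns = f ms"
proof (induction i arbitrary: ns)
  case 0
  then have "ns = ms" by (intro nth_equalityI) (auto simp: tuples_def)
  then show ?case by simp
next
  case (Suc i)
  show ?case
  proof (cases "i < k")
    case False
    then show ?thesis using Suc.IH[OF Suc.prems(1-3)] by simp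
  next
    case True
    define ns' where "ns' = ns[i := ms ! i]"
    have len: "length ns = k" using Suc.prems(1) by (simp add: tuples_def)
    have ns': "ns' \<in> tuples UNIV k" unfolding ns'_def
      using Suc.prems True by (intro tuple_update_from_above) auto
    have "\<forall>a<k. ns' ! a \<le> ms ! a"
      using Suc.prems(3) len True by (auto simp: ns'_def nth_list_update)
    moreover have "\<forall>j. i \<le> j \<and> j < k \<longrightarrow> ns' ! j = ms ! j"
      using Suc.prems(4) len True by (auto simp: ns'_def nth_list_update Suc_le_eq)
    ultimately have "f ns' = f ms" using Suc.IH[OF ns' Suc.prems(2)] by blast
    moreover have "f ns = f ns'"
    proof (cases "ns ! i = ms ! i")
      case True
      then show ?thesis unfolding ns'_def by (metis list_update_id)
    next
      case False
      then have "(ns, ns') \<in> Hpairs UNIV k i"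
        using Suc.prems(1,3) ns' \<open>i < k\<close> len
        by (auto simp: Hpairs_def ns'_def nth_list_update order_less_le)
      then show ?thesis using dist_le_alpha[OF f] zero \<open>i < k\<close> by fastforce
    qed
    ultimately show ?thesis by simp
  qed
qed

lemma alpha_zero_imp_constant:
  assumes f: "hlipschitz k f" and zero: "\<forall>j<k. alpha k f j = 0"
    and ns: "ns \<in> tuples UNIV k" and ms: "ms \<in> tuples UNIV k"
  shows "f ns = f ms"
proof -
  define N where "N = Max (set ns \<union> set ms)"
  define T where "T = map (\<lambda>i. N + i) [0..<k]"
  have T: "T \<in> tuples UNIV k" unfolding T_def tuples_def by (simp add: sorted_wrt_map)
  have "x \<le> N" if "x \<in> set ns \<union> set ms" for x unfolding N_def using that by simp
  then have "\<forall>a<k. ns ! a \<le> T ! a" "\<forall>a<k. ms ! a \<le> T ! a"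
    using ns ms by (auto simp: T_def tuples_def trans_le_add1)
  then have "f ns = f T" "f ms = f T"
    using alpha_zero_imp_eq_of_le[OF f zero _ T, of _ k] ns ms by auto
  then show ?thesis by simp
qed

lemma powr_add_le_two_powr:
  fixes x y p :: real assumes "0 \<le> x" "0 \<le> y" "0 < p"
  shows "(x + y) powr p \<le> 2 powr p * (x powr p + y powr p)"
proof -
  have "(x + y) powr p \<le> (2 * max x y) powr p"
    using assms by (intro powr_mono2) auto
  also have "\<dots> = 2 powr p * max x y powr p"
    using assms by (simp add: powr_mult)
  also have "max x y powr p \<le> x powr p + y powr p"
    by (cases "x \<le> y") (auto simp: max_def)
  then have "2 powr p * max x y powr p \<le> 2 powr p * (x powr p + y powr p)"
    by (intro mult_left_mono) auto
  finally show ?thesis .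
qed

lemma root_powr_add_le:
  fixes U V p :: real assumes "0 \<le> U" "0 \<le> V" "1 < p"
  shows "(U + V) powr (1/p) \<le> 2 * (U powr (1/p) + V powr (1/p))"
proof -
  have "(U + V) powr (1/p) \<le> (2 * max U V) powr (1/p)"
    using assms by (intro powr_mono2) auto
  also have "\<dots> = 2 powr (1/p) * max U V powr (1/p)"
    using assms by (simp add: powr_mult)
  also have "\<dots> \<le> 2 * (U powr (1/p) + V powr (1/p))"
  proof (rule mult_mono)
    have "2 powr (1/p) \<le> 2 powr 1" using assms by (intro powr_mono) auto
    then show "2 powr (1/p) \<le> 2" by simp
    show "max U V powr (1/p) \<le> U powr (1/p) + V powr (1/p)"
      by (cases "U \<le> V") (auto simp: max_def)
  qed auto
  finally show ?thesis .
qed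

lemma psum_affine_bound:
  fixes p c D :: real and a b :: "nat \<Rightarrow> real"
  assumes p: "1 < p" and c: "c \<ge> 0" and D: "D \<ge> 0"
    and ab: "\<forall>j<k. 0 \<le> a j \<and> 0 \<le> b j \<and> b j \<le> c * a j + D"
  shows "(\<Sum>j<k. b j powr p) powr (1/p)
     \<le> 4 * (c * (\<Sum>j<k. a j powr p) powr (1/p) + (real k * D powr p) powr (1/p))"
proof -
  define S where "S = (\<Sum>j<k. a j powr p)"
  define U where "U = c powr p * S"
  define V where "V = real k * D powr p"
  have S: "S \<ge> 0" unfolding S_def by (intro sum_nonneg) auto
  have UV: "U \<ge> 0" "V \<ge> 0" unfolding U_def V_def using S by auto
  have "b j powr p \<le> 2 powr p * (c powr p * a j powr p + D powr p)" if "j < k" for j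
  proof -
    have "b j powr p \<le> (c * a j + D) powr p"
      using ab that p by (intro powr_mono2) auto
    also have "\<dots> \<le> 2 powr p * ((c * a j) powr p + D powr p)"
      using ab that p c D by (intro powr_add_le_two_powr) auto
    finally show ?thesis using c ab that by (simp add: powr_mult)
  qed
  then have "(\<Sum>j<k. b j powr p) \<le> (\<Sum>j<k. 2 powr p * (c powr p * a j powr p + D powr p))"
    by (intro sum_mono) auto
  also have "\<dots> = 2 powr p * (U + V)"
    unfolding U_def V_def S_def by (simp add: sum.distrib sum_distrib_left algebra_simps)
  finally have "(\<Sum>j<k. b j powr p) powr (1/p) \<le> (2 powr p * (U + V)) powr (1/p)"
    using p by (intro powr_mono2) (auto intro: sum_nonneg)
  also have "\<dots> = 2 * (U + V) powr (1/p)"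
    using UV p by (simp add: powr_mult powr_powr)
  also have "\<dots> \<le> 2 * (2 * (U powr (1/p) + V powr (1/p)))"
    using root_powr_add_le[OF UV p] by simp
  also have "U powr (1/p) = c * S powr (1/p)"
    unfolding U_def using c S p by (simp add: powr_mult powr_powr)
  finally show ?thesis unfolding S_def V_def by simp
qed

lemma hlipschitz_coarse_comp:
  assumes f: "hlipschitz k f" and K: "K \<ge> 0" and D: "D \<ge> 0"
    and \<psi>: "\<And>x y. dist (\<psi> x) (\<psi> y) \<le> K * dist x y + D"
  shows "hlipschitz k (\<psi> \<circ> f)"
proof -
  obtain L where L: "\<And>ns ms. ns \<in> tuples UNIV k \<Longrightarrow> ms \<in> tuples UNIV k \<Longrightarrow>
      dist (f ns) (f ms) \<le> L * real (hamming ns ms)"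
    using f unfolding hlipschitz_def by blast
  have "dist (\<psi> (f ns)) (\<psi> (f ms)) \<le> (K * L + D) * real (hamming ns ms)"
    if ns: "ns \<in> tuples UNIV k" and ms: "ms \<in> tuples UNIV k" for ns ms
  proof (cases "ns = ms")
    case False
    then have "1 \<le> real (hamming ns ms)" using hamming_pos[OF ns ms] by simp
    then have "D * 1 \<le> D * real (hamming ns ms)" using D by (rule mult_left_mono)
    moreover have "K * dist (f ns) (f ms) \<le> K * (L * real (hamming ns ms))"
      using L[OF ns ms] K by (rule mult_left_mono)
    ultimately show ?thesis using \<psi>[of "f ns" "f ms"] by (simp add: algebra_simps)
  qed (simp add: hamming_def)
  then show ?thesis unfolding hlipschitz_def by (intro exI[of _ "K * L + D"]) simp
qed

lemma alpha_coarse_comp_le: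
  assumes f: "hlipschitz k f" and K: "K \<ge> 0" and "j < k"
    and \<psi>: "\<And>x y. dist (\<psi> x) (\<psi> y) \<le> K * dist x y + D"
  shows "alpha k (\<psi> \<circ> f) j \<le> K * alpha k f j + D"
  unfolding alpha_def[of k "\<psi> \<circ> f"]
proof (rule cSUP_least)
  show "Hpairs UNIV k j \<noteq> {}" using Hpairs_nonempty[OF \<open>j < k\<close>] .
  fix nm assume "nm \<in> Hpairs UNIV k j"
  then have "K * dist (f (fst nm)) (f (snd nm)) \<le> K * alpha k f j"
    using dist_le_alpha[OF f, of "fst nm" "snd nm"] K by (intro mult_left_mono) auto
  then show "dist ((\<psi> \<circ> f) (fst nm)) ((\<psi> \<circ> f) (snd nm)) \<le> K * alpha k f j + D"
    using \<psi>[of "f (fst nm)" "f (snd nm)"] by simp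
qed

definition alpha_norm :: "real \<Rightarrow> nat \<Rightarrow> (nat list \<Rightarrow> 'b::metric_space) \<Rightarrow> real" where
  "alpha_norm p k f = (\<Sum>j<k. alpha k f j powr p) powr (1/p)"

lemma hbound_alpha_norm: "hbound p lam k f = lam * alpha_norm p k f"
  unfolding hbound_def alpha_norm_def ..

lemma alpha_norm_zero_imp_constant:
  assumes f: "hlipschitz k f" and zero: "alpha_norm p k f = 0"
    and "ns \<in> tuples UNIV k" "ms \<in> tuples UNIV k"
  shows "f ns = f ms"
proof -
  have "(\<Sum>j<k. alpha k f j powr p) = 0" using zero unfolding alpha_norm_def by simp
  then have "\<forall>j<k. alpha k f j = 0" by (simp add: sum_nonneg_eq_0_iff)
  then show ?thesis using alpha_zero_imp_constant[OF f] assms(3,4) by blast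
qed

lemma hbound_pullback_scaled_comp:
  fixes \<phi> :: "'a::real_normed_vector \<Rightarrow> 'b::metric_space" and f :: "nat list \<Rightarrow> 'a"
  assumes pos: "A > 0" "B > 0" "C > 0" "D > 0"
    and upper: "\<And>x y. dist (\<phi> x) (\<phi> y) \<le> C * norm (x - y) + D"
    and lower: "\<And>x y. A * norm (x - y) - B \<le> dist (\<phi> x) (\<phi> y)"
    and p: "1 < p" and lam: "lam > 0" and f: "hlipschitz k f" and S: "alpha_norm p k f > 0"
  obtains g :: "nat list \<Rightarrow> 'b" where "hlipschitz k g"
    and "\<And>ns ms. dist (g ns) (g ms) \<le> hbound p lam k g \<Longrightarrow>
           dist (f ns) (f ms) \<le> hbound p (4 * C / A * lam + 1) k f"
proof -
  define S where "S = alpha_norm p k f"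
  define E where "E = (real k * D powr p) powr (1/p)"
  \<comment> \<open>The scale is chosen so that t A S absorbs the additive error B + 4 lam E.\<close>
  define t where "t = (4 * lam * E + B) / (A * S)"
  have "4 * lam * E + B > 0" using lam pos by (simp add: E_def add_nonneg_pos)
  then have t: "t > 0" unfolding t_def using S pos by (simp add: S_def)
  have tAS: "t * A * S = 4 * lam * E + B" unfolding t_def using S pos by (simp add: S_def)
  define \<psi> where "\<psi> = (\<lambda>x. \<phi> (t *\<^sub>R x))"
  have norm_scaled: "norm (t *\<^sub>R x - t *\<^sub>R y) = t * dist x y" for x y
    using t by (simp add: dist_norm scaleR_diff_right[symmetric])
  have \<psi>_upper: "dist (\<psi> x) (\<psi> y) \<le> (C * t) * dist x y + D" for x y
    using upper[of "t *\<^sub>R x" "t *\<^sub>R y"] by (simp add: \<psi>_def norm_scaled mult.assoc)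
  have \<psi>_lower: "(A * t) * dist x y - B \<le> dist (\<psi> x) (\<psi> y)" for x y
    using lower[of "t *\<^sub>R x" "t *\<^sub>R y"] by (simp add: \<psi>_def norm_scaled mult.assoc)
  have Ct: "C * t \<ge> 0" using pos t by simp
  have g: "hlipschitz k (\<psi> \<circ> f)"
    using hlipschitz_coarse_comp[OF f Ct _ \<psi>_upper] pos by simp
  have "alpha_norm p k (\<psi> \<circ> f) \<le> 4 * (C * t * S + E)"
    unfolding alpha_norm_def S_def E_def using pos
    by (intro psum_affine_bound[OF p Ct])
       (auto simp: alpha_nonneg[OF f] alpha_nonneg[OF g] alpha_coarse_comp_le[OF f Ct _ \<psi>_upper])
  then have hbound_g: "hbound p lam k (\<psi> \<circ> f) \<le> lam * (4 * (C * t * S + E))"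
    unfolding hbound_alpha_norm using lam by (intro mult_left_mono) auto
  have "dist (f ns) (f ms) \<le> hbound p (4 * C / A * lam + 1) k f"
    if "dist ((\<psi> \<circ> f) ns) ((\<psi> \<circ> f) ms) \<le> hbound p lam k (\<psi> \<circ> f)" for ns ms
  proof -
    have "(A * t) * dist (f ns) (f ms) \<le> lam * (4 * (C * t * S + E)) + B"
      using \<psi>_lower[of "f ns" "f ms"] that hbound_g by simp
    also have "\<dots> = 4 * lam * C * t * S + t * A * S"
      unfolding tAS by (simp add: algebra_simps)
    also have "\<dots> = (A * t) * ((4 * C / A * lam + 1) * S)"
      using pos by (simp add: field_simps)
    finally show ?thesis using pos t by (simp add: hbound_alpha_norm S_def)
  qed
  then show ?thesis by (rule that[OF g])
qed

definition hbound_pullback ::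
    "real \<Rightarrow> real \<Rightarrow> real \<Rightarrow> 'a::metric_space itself \<Rightarrow> 'b::metric_space itself \<Rightarrow> bool" where
  "hbound_pullback p lam lam' _ _ \<longleftrightarrow> (\<forall>k (f :: nat list \<Rightarrow> 'a). hlipschitz k f \<longrightarrow>
     (\<exists>g :: nat list \<Rightarrow> 'b. hlipschitz k g \<and> (\<forall>ns\<in>tuples UNIV k. \<forall>ms\<in>tuples UNIV k.
        dist (g ns) (g ms) \<le> hbound p lam k g \<longrightarrow> dist (f ns) (f ms) \<le> hbound p lam' k f)))"

lemma coarse_lipschitz_embedding_hbound_pullback:
  fixes \<phi> :: "'a::real_normed_vector \<Rightarrow> 'b::metric_space"
  assumes "coarse_lipschitz_embedding \<phi>" and p: "1 < p"
  obtains c where "c > 0" "\<And>lam. lam > 0 \<Longrightarrow> hbound_pullback p lam (c * lam + 1) TYPE('a) TYPE('b)"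
proof -
  obtain A B C D where pos: "A > 0" "B > 0" "C > 0" "D > 0"
    and upper: "\<And>x y. dist (\<phi> x) (\<phi> y) \<le> C * norm (x - y) + D"
    and lower: "\<And>x y. A * norm (x - y) - B \<le> dist (\<phi> x) (\<phi> y)"
    using coarse_lipschitz_embedding_bounds[OF assms(1)] by blast
  have "hbound_pullback p lam (4 * C / A * lam + 1) TYPE('a) TYPE('b)" if lam: "lam > 0" for lam
    unfolding hbound_pullback_def
  proof (intro allI impI)
    fix k and f :: "nat list \<Rightarrow> 'a" assume f: "hlipschitz k f"
    show "\<exists>g :: nat list \<Rightarrow> 'b. hlipschitz k g \<and> (\<forall>ns\<in>tuples UNIV k. \<forall>ms\<in>tuples UNIV k.
        dist (g ns) (g ms) \<le> hbound p lam k g \<longrightarrow> dist (f ns) (f ms) \<le> hbound p (4 * C / A * lam + 1) k f)"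
    proof (cases "alpha_norm p k f > 0")
      case True
      obtain g :: "nat list \<Rightarrow> 'b" where "hlipschitz k g"
        and "\<And>ns ms. dist (g ns) (g ms) \<le> hbound p lam k g \<Longrightarrow>
               dist (f ns) (f ms) \<le> hbound p (4 * C / A * lam + 1) k f"
        using hbound_pullback_scaled_comp[OF pos upper lower p lam f True] by metis
      then show ?thesis by blast
    next
      case False
      then have "alpha_norm p k f = 0" unfolding alpha_norm_def by (metis powr_ge_zero order_le_less)
      then have "dist (f ns) (f ms) \<le> hbound p (4 * C / A * lam + 1) k f"
        if "ns \<in> tuples UNIV k" "ms \<in> tuples UNIV k" for ns ms
        using alpha_norm_zero_imp_constant[OF f _ that] by (simp add: hbound_alpha_norm)
      moreover have "hlipschitz k (\<lambda>_. \<phi> 0)" unfolding hlipschitz_def by (auto intro: exI[of _ 0])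
      ultimately show ?thesis by (intro exI[of _ "\<lambda>_. \<phi> 0"]) blast
    qed
  qed
  moreover have "4 * C / A > 0" using pos by simp
  ultimately show ?thesis using that by blast
qed

lemma lam_HFC_pullback:
  assumes "hbound_pullback p lam lam' TYPE('a::metric_space) TYPE('b::metric_space)"
    and "lam_HFC p lam TYPE('b)"
  shows "lam_HFC p lam' TYPE('a)"
  unfolding lam_HFC_def
proof (intro allI impI)
  fix k and f :: "nat list \<Rightarrow> 'a" assume "hlipschitz k f"
  then obtain g :: "nat list \<Rightarrow> 'b" where g: "hlipschitz k g" and pull:
    "\<forall>ns\<in>tuples UNIV k. \<forall>ms\<in>tuples UNIV k.
       dist (g ns) (g ms) \<le> hbound p lam k g \<longrightarrow> dist (f ns) (f ms) \<le> hbound p lam' k f"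
    using assms(1)[unfolded hbound_pullback_def, rule_format] by blast
  obtain M where "infinite M"
    and M: "\<forall>ns\<in>tuples M k. \<forall>ms\<in>tuples M k. dist (g ns) (g ms) \<le> hbound p lam k g"
    using assms(2)[unfolded lam_HFC_def, rule_format, OF g] by blast
  moreover have "dist (f ns) (f ms) \<le> hbound p lam' k f"
    if "ns \<in> tuples M k" "ms \<in> tuples M k" for ns ms
    using pull M that tuples_mono[of M UNIV k] by blast
  ultimately show "\<exists>M. infinite M \<and>
      (\<forall>ns\<in>tuples M k. \<forall>ms\<in>tuples M k. dist (f ns) (f ms) \<le> hbound p lam' k f)"
    by blast
qed

lemma lam_HIC_pullback:
  assumes "hbound_pullback p lam lam' TYPE('a::metric_space) TYPE('b::metric_space)"
    and "lam_HIC p lam TYPE('b)"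
  shows "lam_HIC p lam' TYPE('a)"
  unfolding lam_HIC_def
proof (intro allI impI)
  fix k and f :: "nat list \<Rightarrow> 'a" assume "hlipschitz k f"
  then obtain g :: "nat list \<Rightarrow> 'b" where g: "hlipschitz k g" and pull:
    "\<forall>ns\<in>tuples UNIV k. \<forall>ms\<in>tuples UNIV k.
       dist (g ns) (g ms) \<le> hbound p lam k g \<longrightarrow> dist (f ns) (f ms) \<le> hbound p lam' k f"
    using assms(1)[unfolded hbound_pullback_def, rule_format] by blast
  obtain M where "infinite M"
    and M: "\<forall>(ns, ms)\<in>interlaced M k. dist (g ns) (g ms) \<le> hbound p lam k g"
    using assms(2)[unfolded lam_HIC_def, rule_format, OF g] by blast
  moreover have "dist (f ns) (f ms) \<le> hbound p lam' k f" if "(ns, ms) \<in> interlaced M k" for ns ms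
    using pull interlaced_subset_tuples[OF that] bspec[OF M that] by simp
  ultimately show "\<exists>M. infinite M \<and>
      (\<forall>(ns, ms)\<in>interlaced M k. dist (f ns) (f ms) \<le> hbound p lam' k f)"
    by blast
qed

lemma lam_HC_pullback:
  assumes "hbound_pullback p lam lam' TYPE('a::metric_space) TYPE('b::metric_space)"
    and "lam_HC p lam TYPE('b)"
  shows "lam_HC p lam' TYPE('a)"
  unfolding lam_HC_def
proof (intro allI impI)
  fix k and f :: "nat list \<Rightarrow> 'a" assume "hlipschitz k f"
  then obtain g :: "nat list \<Rightarrow> 'b" where g: "hlipschitz k g" and pull:
    "\<forall>ns\<in>tuples UNIV k. \<forall>ms\<in>tuples UNIV k.
       dist (g ns) (g ms) \<le> hbound p lam k g \<longrightarrow> dist (f ns) (f ms) \<le> hbound p lam' k f"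
    using assms(1)[unfolded hbound_pullback_def, rule_format] by blast
  obtain ns ms where "ns \<in> tuples UNIV k" "ms \<in> tuples UNIV k" "set ns \<inter> set ms = {}"
    and "dist (g ns) (g ms) \<le> hbound p lam k g"
    using assms(2)[unfolded lam_HC_def, rule_format, OF g] by blast
  with pull show "\<exists>ns\<in>tuples UNIV k. \<exists>ms\<in>tuples UNIV k. set ns \<inter> set ms = {} \<and>
      dist (f ns) (f ms) \<le> hbound p lam' k f"
    by blast
qed

theorem mainTheorem2:
  fixes p :: real and \<phi> :: "'a::banach \<Rightarrow> 'b::metric_space"
  assumes "1 < p"
    and "coarse_lipschitz_embedding \<phi>"
  shows "(HFC p TYPE('b) \<longrightarrow> HFC p TYPE('a))
       \<and> (HIC p TYPE('b) \<longrightarrow> HIC p TYPE('a))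
       \<and> (HC p TYPE('b) \<longrightarrow> HC p TYPE('a))"
proof -
  obtain c where c: "c > 0"
    and pull: "\<And>lam. lam > 0 \<Longrightarrow> hbound_pullback p lam (c * lam + 1) TYPE('a) TYPE('b)"
    using coarse_lipschitz_embedding_hbound_pullback[OF assms(2,1)] by blast
  have pos: "c * lam + 1 > 0" if "lam > 0" for lam
    using c that by (simp add: add_pos_pos)
  have "HFC p TYPE('a)" if "HFC p TYPE('b)"
  proof -
    from that obtain lam where lam: "lam > 0" and Y: "lam_HFC p lam TYPE('b)" unfolding HFC_def by blast
    have "lam_HFC p (c * lam + 1) TYPE('a)" by (rule lam_HFC_pullback[OF pull[OF lam] Y])
    then show ?thesis unfolding HFC_def using pos[OF lam] by blast
  qed
  moreover
  have "HIC p TYPE('a)" if "HIC p TYPE('b)"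
  proof -
    from that obtain lam where lam: "lam > 0" and Y: "lam_HIC p lam TYPE('b)" unfolding HIC_def by blast
    have "lam_HIC p (c * lam + 1) TYPE('a)" by (rule lam_HIC_pullback[OF pull[OF lam] Y])
    then show ?thesis unfolding HIC_def using pos[OF lam] by blast
  qed
  moreover
  have "HC p TYPE('a)" if "HC p TYPE('b)"
  proof -
    from that obtain lam where lam: "lam > 0" and Y: "lam_HC p lam TYPE('b)" unfolding HC_def by blast
    have "lam_HC p (c * lam + 1) TYPE('a)" by (rule lam_HC_pullback[OF pull[OF lam] Y])
    then show ?thesis unfolding HC_def using pos[OF lam] by blast
  qed
  ultimately show ?thesis by blast
qed

end
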